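(* Let $\gamma>1$ and let $\Psi$ be a Borel probability measure on $\Delta_n$ such that $\Psi(\{\mathbf s\in\Delta_n:\mathbf a^\top\mathbf s=0\})=0$ for every nonzero $\mathbf a\in\mathbb R^n$. Define $\eta_{\mathbf x}=\int_{\Delta_n}(\mathbf x^\top\mathbf s)^\gamma\,\Psi(\mathrm d\mathbf s)$ for $\mathbf x\in[0,\infty)^n$, and assume $\eta_{\mathbf e_i}>0$ for $i=1,\dots,n$. Then the function $f(\mathbf w)=\eta_{\mathbf w}/\left(\sum_{i=1}^nw_i\eta_{\mathbf e_i}^{1/\gamma}\right)^\gamma$ has a unique minimizer on $\Delta_n$.
   Context: $\Delta_n=\{\mathbf x\in[0,1]^n:x_1+\dots+x_n=1\}$ and $\mathbf e_1,\dots,\mathbf e_n$ are the standard basis vectors of $\mathbb R^n$. *)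

theory Defs
  imports "HOL-Probability.Probability"
begin

definition std_simplex :: "(real^'n) set" where
  "std_simplex = {x. (\<forall>i. 0 \<le> x $ i \<and> x $ i \<le> 1) \<and> (\<Sum>i\<in>UNIV. x $ i) = 1}"

definition eta :: "(real^'n) measure \<Rightarrow> real \<Rightarrow> real^'n \<Rightarrow> real" where
  "eta Psi \<gamma> x = (LINT s:std_simplex|Psi. (x \<bullet> s) powr \<gamma>)"

definition fobj :: "(real^'n) measure \<Rightarrow> real \<Rightarrow> real^'n \<Rightarrow> real" where
  "fobj Psi \<gamma> w = eta Psi \<gamma> w /
     (\<Sum>i\<in>UNIV. w $ i * (eta Psi \<gamma> (axis i 1)) powr (1 / \<gamma>)) powr \<gamma>"

end

theory Submission
  imports Defs
begin

text \<open>
  The objective is invariant under positive scaling, so on the hyperplane \<open>x \<bullet> c = 1\<close>, where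
  \<open>c\<close> is the vector of the weights \<open>\<eta>(e\<^sub>i) powr (1 / \<gamma>)\<close>, it coincides with \<open>\<eta>\<close>.
  Since \<open>t \<mapsto> t\<^sup>\<gamma>\<close> is strictly convex, \<open>\<eta>\<close> is midpoint convex on the nonnegative orthant,
  strictly so unless the linear forms \<open>x \<bullet> s\<close> and \<open>y \<bullet> s\<close> agree \<open>\<Psi>\<close>-almost everywhere, which the
  null-hyperplane hypothesis excludes for \<open>x \<noteq> y\<close>. Rescaling two distinct minimisers onto that
  hyperplane and taking the point of the simplex on the ray through their midpoint would therefore
  give a strictly smaller value. Existence follows from compactness of the simplex and continuity.
\<close>

lemma mem_std_simplex:
  "x \<in> std_simplex \<longleftrightarrow> (\<forall>i. 0 \<le> x $ i) \<and> (\<Sum>i\<in>UNIV. x $ i) = 1"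
proof -
  have "x $ i \<le> (\<Sum>i\<in>UNIV. x $ i)" if "\<forall>i. 0 \<le> x $ i" for i
    using that by (intro member_le_sum) auto
  then show ?thesis by (auto simp: std_simplex_def)
qed

lemma closed_std_simplex: "closed (std_simplex :: (real^'n) set)"
proof -
  have "std_simplex = (\<Inter>i. {x::real^'n. 0 \<le> x $ i}) \<inter> {x. (\<Sum>i\<in>UNIV. x $ i) = 1}"
    by (auto simp: mem_std_simplex)
  also have "closed \<dots>"
    by (intro closed_Int closed_INT ballI closed_halfspace_component_ge_cart closed_Collect_eq
        continuous_intros)
  finally show ?thesis .
qed

lemma std_simplex_in_borel [measurable]: "std_simplex \<in> sets (borel :: (real^'n) measure)"
  using closed_std_simplex by (rule borel_closed)

lemma norm_le_one_std_simplex: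
  assumes "s \<in> std_simplex" shows "norm s \<le> 1"
  using norm_le_l1_cart[of s] assms by (simp add: std_simplex_def)

lemma compact_std_simplex: "compact (std_simplex :: (real^'n) set)"
  using closed_std_simplex norm_le_one_std_simplex
  by (auto simp: compact_eq_bounded_closed bounded_iff)

lemma convex_std_simplex: "convex (std_simplex :: (real^'n) set)"
  by (simp add: convex_def mem_std_simplex sum.distrib flip: sum_distrib_left)

lemma axis_in_std_simplex: "axis i 1 \<in> std_simplex"
  by (auto simp: std_simplex_def axis_def)

lemma zero_notin_std_simplex: "0 \<notin> std_simplex"
  by (simp add: std_simplex_def)

lemma std_simplex_scaleR_eq:
  assumes "w \<in> std_simplex" "v \<in> std_simplex" "w = c *\<^sub>R v"
  shows "w = v"
proof -
  have "(\<Sum>i\<in>UNIV. w $ i) = c * (\<Sum>i\<in>UNIV. v $ i)"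
    using assms(3) by (simp add: sum_distrib_left)
  then have "c = 1" using assms(1,2) by (simp add: mem_std_simplex)
  then show ?thesis using assms(3) by simp
qed

lemma inner_std_simplex_nonneg:
  assumes "\<forall>i. 0 \<le> x $ i" "s \<in> std_simplex"
  shows "0 \<le> x \<bullet> s"
  using assms by (auto simp: inner_vec_def std_simplex_def intro: sum_nonneg)

lemma inner_std_simplex_le_norm:
  assumes "s \<in> std_simplex" shows "x \<bullet> s \<le> norm x"
  using norm_cauchy_schwarz[of x s] norm_le_one_std_simplex[OF assms]
    mult_left_le[of "norm s" "norm x"] by simp

lemma powr_midpoint_less:
  fixes p q \<gamma> :: real
  assumes "\<gamma> > 1" "0 \<le> p" "0 \<le> q" "p \<noteq> q"
  shows "((p + q) / 2) powr \<gamma> < (p powr \<gamma> + q powr \<gamma>) / 2"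
proof -
  have cont: "continuous_on {a..b} (\<lambda>t. t powr \<gamma>)" if "0 \<le> a" for a b :: real
    using that assms(1) by (intro continuous_on_powr' continuous_intros) auto
  have less: "((p + q) / 2) powr \<gamma> < (p powr \<gamma> + q powr \<gamma>) / 2" if "0 \<le> p" "p < q" for p q :: real
  proof -
    define m where "m = (p + q) / 2"
    have pm: "p < m" "m < q" and m0: "0 \<le> m" using that unfolding m_def by auto
    have deriv: "((\<lambda>t. t powr \<gamma>) has_derivative (*) (\<gamma> * t powr (\<gamma> - 1))) (at t)"
      if "p < t" for t :: real
      using has_real_derivative_powr[of t \<gamma>] that \<open>0 \<le> p\<close> by (simp add: has_field_derivative_def)
    obtain z1 where z1: "p < z1" "z1 < m" "m powr \<gamma> - p powr \<gamma> = \<gamma> * z1 powr (\<gamma> - 1) * (m - p)"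
      using mvt[OF pm(1) cont[OF \<open>0 \<le> p\<close>] deriv] by auto
    obtain z2 where z2: "m < z2" "z2 < q" "q powr \<gamma> - m powr \<gamma> = \<gamma> * z2 powr (\<gamma> - 1) * (q - m)"
      using mvt[OF pm(2) cont[OF m0] deriv] pm(1) by auto
    have "z1 powr (\<gamma> - 1) < z2 powr (\<gamma> - 1)"
      using z1 z2 that assms(1) by (intro powr_less_mono2) auto
    moreover have "q - m = m - p" unfolding m_def by (simp add: field_simps)
    moreover have "0 < m - p" using pm by simp
    ultimately have "\<gamma> * z1 powr (\<gamma> - 1) * (m - p) < \<gamma> * z2 powr (\<gamma> - 1) * (q - m)"
      using assms(1) by simp
    then show ?thesis using z1 z2 unfolding m_def by simp
  qed
  show ?thesis
    using less[of p q] less[of q p] assms(2-4) by (cases "p < q") (auto simp: add.commute)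
qed

lemma powr_midpoint_le:
  fixes p q \<gamma> :: real
  assumes "\<gamma> > 1" "0 \<le> p" "0 \<le> q"
  shows "((p + q) / 2) powr \<gamma> \<le> (p powr \<gamma> + q powr \<gamma>) / 2"
  using powr_midpoint_less[OF assms] by (cases "p = q") auto

lemma set_integrable_inner_powr:
  fixes Psi :: "(real^'n) measure"
  assumes "finite_measure Psi" and [measurable_cong]: "sets Psi = sets borel"
    and "\<forall>i. 0 \<le> x $ i" "0 \<le> \<gamma>"
  shows "set_integrable Psi std_simplex (\<lambda>s. (x \<bullet> s) powr \<gamma>)"
  unfolding set_integrable_def
proof (rule finite_measure.integrable_const_bound[OF assms(1), where B="norm x powr \<gamma>"])
  show "(\<lambda>s. indicator std_simplex s *\<^sub>R (x \<bullet> s) powr \<gamma>) \<in> borel_measurable Psi"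
    by measurable
  show "AE s in Psi. norm (indicator std_simplex s *\<^sub>R (x \<bullet> s) powr \<gamma>) \<le> norm x powr \<gamma>"
    using inner_std_simplex_nonneg[OF assms(3)] inner_std_simplex_le_norm assms(4)
    by (intro AE_I2) (auto simp: indicator_def intro: powr_mono2)
qed

lemma eta_scaleR: "eta Psi \<gamma> (c *\<^sub>R x) = c powr \<gamma> * eta Psi \<gamma> x"
  unfolding eta_def by (simp add: powr_mult)

lemma eta_midpoint_less:
  fixes Psi :: "(real^'n) measure"
  assumes "finite_measure Psi" and [measurable_cong]: "sets Psi = sets borel" and "\<gamma> > 1"
    and x: "\<forall>i. 0 \<le> x $ i" and y: "\<forall>i. 0 \<le> y $ i"
    and separating: "measure Psi {s \<in> std_simplex. x \<bullet> s \<noteq> y \<bullet> s} \<noteq> 0"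
  shows "eta Psi \<gamma> (midpoint x y) < (eta Psi \<gamma> x + eta Psi \<gamma> y) / 2"
proof -
  interpret finite_measure Psi by fact
  define A where "A = {s \<in> std_simplex. x \<bullet> s \<noteq> y \<bullet> s}"
  define X where "X = (\<lambda>s. indicator std_simplex s * ((x \<bullet> s + y \<bullet> s) / 2) powr \<gamma>)"
  define Y where "Y = (\<lambda>s. indicator std_simplex s * (((x \<bullet> s) powr \<gamma> + (y \<bullet> s) powr \<gamma>) / 2))"
  have mid: "midpoint x y \<bullet> s = (x \<bullet> s + y \<bullet> s) / 2" for s
    by (simp add: midpoint_def inner_add_left)
  have "\<forall>i. 0 \<le> midpoint x y $ i" using x y by (simp add: midpoint_def)
  then have intX: "integrable Psi X" and IX: "integral\<^sup>L Psi X = eta Psi \<gamma> (midpoint x y)"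
    using set_integrable_inner_powr[OF assms(1,2), of "midpoint x y" \<gamma>] assms(3)
    by (simp_all add: X_def eta_def set_integrable_def set_lebesgue_integral_def mid)
  have ix: "set_integrable Psi std_simplex (\<lambda>s. (x \<bullet> s) powr \<gamma>)"
    and iy: "set_integrable Psi std_simplex (\<lambda>s. (y \<bullet> s) powr \<gamma>)"
    using set_integrable_inner_powr[OF assms(1,2)] x y assms(3) by simp_all
  then have "set_integrable Psi std_simplex (\<lambda>s. ((x \<bullet> s) powr \<gamma> + (y \<bullet> s) powr \<gamma>) / 2)"
    and "(LINT s:std_simplex|Psi. ((x \<bullet> s) powr \<gamma> + (y \<bullet> s) powr \<gamma>) / 2) = (eta Psi \<gamma> x + eta Psi \<gamma> y) / 2"
    by (auto simp: eta_def)
  then have intY: "integrable Psi Y" and IY: "integral\<^sup>L Psi Y = (eta Psi \<gamma> x + eta Psi \<gamma> y) / 2"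
    by (simp_all add: Y_def set_integrable_def set_lebesgue_integral_def)
  have A_sets: "A \<in> sets Psi" unfolding A_def by measurable
  have A_pos: "emeasure Psi A \<noteq> 0" using separating by (simp add: A_def emeasure_eq_measure)
  have neq: "X s \<noteq> Y s" if "s \<in> A" for s
  proof -
    have s: "s \<in> std_simplex" "x \<bullet> s \<noteq> y \<bullet> s" using that by (auto simp: A_def)
    show ?thesis
      using powr_midpoint_less[OF assms(3) inner_std_simplex_nonneg[OF x s(1)]
          inner_std_simplex_nonneg[OF y s(1)] s(2)] s(1)
      by (simp add: X_def Y_def)
  qed
  have le: "X s \<le> Y s" for s
  proof (cases "s \<in> std_simplex")
    case True
    then show ?thesis
      using powr_midpoint_le[OF assms(3) inner_std_simplex_nonneg[OF x] inner_std_simplex_nonneg[OF y]]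
      by (simp add: X_def Y_def)
  qed (simp add: X_def Y_def)
  have "integral\<^sup>L Psi X < integral\<^sup>L Psi Y"
  proof (rule integral_less_AE[OF intX intY A_pos A_sets])
    show "AE s in Psi. s \<in> A \<longrightarrow> X s \<noteq> Y s" using neq by (intro AE_I2) blast
    show "AE s in Psi. X s \<le> Y s" using le by (intro AE_I2) blast
  qed
  then show ?thesis unfolding IX IY .
qed

lemma measure_std_simplex_inner_neq:
  fixes Psi :: "(real^'n) measure"
  assumes "finite_measure Psi" and [measurable_cong]: "sets Psi = sets borel"
    and "measure Psi std_simplex = 1"
    and "\<And>a::real^'n. a \<noteq> 0 \<Longrightarrow> measure Psi {s\<in>std_simplex. a \<bullet> s = 0} = 0"
    and "x \<noteq> y"
  shows "measure Psi {s \<in> std_simplex. x \<bullet> s \<noteq> y \<bullet> s} = 1"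
proof -
  interpret finite_measure Psi by fact
  have "{s \<in> std_simplex. x \<bullet> s \<noteq> y \<bullet> s} = std_simplex - {s \<in> std_simplex. (x - y) \<bullet> s = 0}"
    by (auto simp: inner_diff_left)
  then have "measure Psi {s \<in> std_simplex. x \<bullet> s \<noteq> y \<bullet> s}
      = measure Psi std_simplex - measure Psi {s \<in> std_simplex. (x - y) \<bullet> s = 0}"
    by (simp add: finite_measure_Diff)
  then show ?thesis using assms(3-5) by simp
qed

lemma continuous_on_eta:
  fixes Psi :: "(real^'n) measure"
  assumes "finite_measure Psi" and [measurable_cong]: "sets Psi = sets borel" and "0 < \<gamma>"
  shows "continuous_on std_simplex (eta Psi \<gamma>)"
proof (rule continuous_on_sequentiallyI)
  fix u :: "nat \<Rightarrow> real^'n" and a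
  assume u: "\<forall>n. u n \<in> std_simplex" and "a \<in> std_simplex" and lim: "u \<longlonglongrightarrow> a"
  interpret finite_measure Psi by fact
  have u_bounds: "0 \<le> u n \<bullet> s \<and> u n \<bullet> s \<le> 1" if "s \<in> std_simplex" for n s
  proof
    show "0 \<le> u n \<bullet> s"
      using u that by (intro inner_std_simplex_nonneg) (auto simp: mem_std_simplex)
    show "u n \<bullet> s \<le> 1"
      using inner_std_simplex_le_norm[OF that] norm_le_one_std_simplex u by (metis order_trans)
  qed
  have pointwise: "(\<lambda>n. (u n \<bullet> s) powr \<gamma>) \<longlonglongrightarrow> (a \<bullet> s) powr \<gamma>"
    if "s \<in> std_simplex" for s
  proof (rule tendsto_powr')
    show "(\<lambda>n. u n \<bullet> s) \<longlonglongrightarrow> a \<bullet> s" by (intro tendsto_inner lim tendsto_const)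
  qed (use u_bounds[OF that] assms(3) in auto)
  have "(\<lambda>n. LINT s|Psi. indicator std_simplex s * (u n \<bullet> s) powr \<gamma>)
      \<longlonglongrightarrow> LINT s|Psi. indicator std_simplex s * (a \<bullet> s) powr \<gamma>"
  proof (intro integral_dominated_convergence[where w="\<lambda>_. 1"] AE_I2)
    show "(\<lambda>n. indicator std_simplex s * (u n \<bullet> s) powr \<gamma>)
        \<longlonglongrightarrow> indicator std_simplex s * (a \<bullet> s) powr \<gamma>" for s
      using pointwise by (cases "s \<in> std_simplex") (simp_all add: tendsto_mult_left)
    show "norm (indicator std_simplex s * (u n \<bullet> s) powr \<gamma>) \<le> 1" for n s
    proof (cases "s \<in> std_simplex")
      case True
      then have "(u n \<bullet> s) powr \<gamma> \<le> 1"
        using u_bounds assms(3) by (intro powr_le1) auto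
      then show ?thesis using True by simp
    qed simp
  qed simp_all
  then show "(\<lambda>n. eta Psi \<gamma> (u n)) \<longlonglongrightarrow> eta Psi \<gamma> a"
    by (simp add: eta_def set_lebesgue_integral_def)
qed

definition axis_weights :: "(real^'n) measure \<Rightarrow> real \<Rightarrow> real^'n" where
  "axis_weights Psi \<gamma> = (\<chi> i. eta Psi \<gamma> (axis i 1) powr (1 / \<gamma>))"

lemma fobj_eq: "fobj Psi \<gamma> w = eta Psi \<gamma> w / (w \<bullet> axis_weights Psi \<gamma>) powr \<gamma>"
  by (simp add: fobj_def axis_weights_def inner_vec_def)

lemma fobj_scaleR:
  assumes "0 < c" shows "fobj Psi \<gamma> (c *\<^sub>R w) = fobj Psi \<gamma> w"
  using assms by (simp add: fobj_eq eta_scaleR powr_mult)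

lemma fobj_eq_eta:
  assumes "w \<bullet> axis_weights Psi \<gamma> = 1" shows "fobj Psi \<gamma> w = eta Psi \<gamma> w"
  using assms by (simp add: fobj_eq)

lemma inner_axis_weights_pos:
  assumes "\<And>i. eta Psi \<gamma> (axis i 1) > 0" "\<forall>i. 0 \<le> w $ i" "w \<noteq> 0"
  shows "0 < w \<bullet> axis_weights Psi \<gamma>"
proof -
  obtain i where "w $ i \<noteq> 0" using assms(3) by (auto simp: vec_eq_iff)
  then have "0 < w $ i" using assms(2) by (simp add: order_le_neq_trans)
  moreover have "eta Psi \<gamma> (axis i 1) \<noteq> 0" using assms(1)[of i] by simp
  ultimately have "0 < w $ i * axis_weights Psi \<gamma> $ i" by (simp add: axis_weights_def)
  moreover have "0 \<le> w $ j * axis_weights Psi \<gamma> $ j" for j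
    using assms(2) by (simp add: axis_weights_def)
  ultimately show ?thesis unfolding inner_vec_def by (intro sum_pos2[of UNIV i]) auto
qed

lemma continuous_on_fobj:
  fixes Psi :: "(real^'n) measure"
  assumes "finite_measure Psi" "sets Psi = sets borel" "0 < \<gamma>"
    and "\<And>i. eta Psi \<gamma> (axis i 1) > 0"
  shows "continuous_on std_simplex (fobj Psi \<gamma>)"
proof -
  have pos: "0 < w \<bullet> axis_weights Psi \<gamma>" if "w \<in> std_simplex" for w
  proof (rule inner_axis_weights_pos[OF assms(4)])
    show "\<forall>i. 0 \<le> w $ i" using that by (simp add: mem_std_simplex)
    show "w \<noteq> 0" using that zero_notin_std_simplex by blast
  qed
  show ?thesis
    unfolding fobj_eq using continuous_on_eta[OF assms(1-3)]
    by (intro continuous_intros continuous_on_powr') (auto dest: pos)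
qed

lemma ex_fobj_less_average:
  fixes Psi :: "(real^'n) measure"
  assumes "finite_measure Psi" "sets Psi = sets borel" "\<gamma> > 1"
    and "measure Psi std_simplex = 1"
    and null_hyperplanes: "\<And>a::real^'n. a \<noteq> 0 \<Longrightarrow> measure Psi {s\<in>std_simplex. a \<bullet> s = 0} = 0"
    and "\<And>i. eta Psi \<gamma> (axis i 1) > 0"
    and w: "w \<in> std_simplex" and v: "v \<in> std_simplex" and "w \<noteq> v"
  shows "\<exists>u\<in>std_simplex. fobj Psi \<gamma> u < (fobj Psi \<gamma> w + fobj Psi \<gamma> v) / 2"
proof -
  define c where "c = axis_weights Psi \<gamma>"
  define a where "a = w \<bullet> c"
  define b where "b = v \<bullet> c"
  have w_nonneg: "\<forall>i. 0 \<le> w $ i" and v_nonneg: "\<forall>i. 0 \<le> v $ i"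
    using w v by (simp_all add: mem_std_simplex)
  have "w \<noteq> 0" "v \<noteq> 0" using w v zero_notin_std_simplex by blast+
  then have "0 < a" "0 < b"
    using w_nonneg v_nonneg inner_axis_weights_pos[OF assms(6)] by (simp_all add: a_def b_def c_def)
  \<comment> \<open>normalise \<open>w\<close> and \<open>v\<close> to the affine hyperplane \<open>{x. x \<bullet> c = 1}\<close>, where \<open>fobj = eta\<close>\<close>
  define x where "x = (1 / a) *\<^sub>R w"
  define y where "y = (1 / b) *\<^sub>R v"
  have x_nonneg: "\<forall>i. 0 \<le> x $ i" and y_nonneg: "\<forall>i. 0 \<le> y $ i"
    using w_nonneg v_nonneg \<open>0 < a\<close> \<open>0 < b\<close> by (simp_all add: x_def y_def)
  have w_eq: "w = a *\<^sub>R x" and v_eq: "v = b *\<^sub>R y"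
    using \<open>0 < a\<close> \<open>0 < b\<close> by (simp_all add: x_def y_def)
  have xc: "x \<bullet> c = 1" and yc: "y \<bullet> c = 1"
    using \<open>0 < a\<close> \<open>0 < b\<close> by (simp_all add: x_def y_def a_def b_def)
  have "x \<noteq> y"
    using std_simplex_scaleR_eq[OF w v, of "a / b"] w_eq \<open>w \<noteq> v\<close> by (auto simp: y_def)
  then have "measure Psi {s \<in> std_simplex. x \<bullet> s \<noteq> y \<bullet> s} \<noteq> 0"
    using measure_std_simplex_inner_neq[OF assms(1,2,4) null_hyperplanes] by simp
  then have eta_mid: "eta Psi \<gamma> (midpoint x y) < (eta Psi \<gamma> x + eta Psi \<gamma> y) / 2"
    using eta_midpoint_less[OF assms(1-3) x_nonneg y_nonneg] by blast
  \<comment> \<open>the point of the simplex on the ray through the midpoint of \<open>x\<close> and \<open>y\<close>\<close>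
  define u where "u = (b / (a + b)) *\<^sub>R w + (a / (a + b)) *\<^sub>R v"
  have "u \<in> std_simplex"
    unfolding u_def using \<open>0 < a\<close> \<open>0 < b\<close> w v
    by (intro convexD[OF convex_std_simplex]) (simp_all add: add_divide_distrib[symmetric])
  moreover have "fobj Psi \<gamma> u = eta Psi \<gamma> (midpoint x y)"
  proof -
    have "u = (2 * a * b / (a + b)) *\<^sub>R midpoint x y"
      using \<open>0 < a\<close> \<open>0 < b\<close> by (simp add: u_def x_def y_def midpoint_def algebra_simps)
    moreover have "0 < 2 * a * b / (a + b)" using \<open>0 < a\<close> \<open>0 < b\<close> by simp
    moreover have "midpoint x y \<bullet> c = 1" using xc yc by (simp add: midpoint_def inner_add_left)
    ultimately show ?thesis by (simp add: fobj_scaleR fobj_eq_eta c_def)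
  qed
  moreover have "fobj Psi \<gamma> w = eta Psi \<gamma> x" "fobj Psi \<gamma> v = eta Psi \<gamma> y"
    using fobj_scaleR[OF \<open>0 < a\<close>, of Psi \<gamma> x] fobj_scaleR[OF \<open>0 < b\<close>, of Psi \<gamma> y]
      fobj_eq_eta[OF xc[unfolded c_def]] fobj_eq_eta[OF yc[unfolded c_def]] w_eq v_eq by simp_all
  ultimately show ?thesis using eta_mid by (intro bexI[of _ u]) simp_all
qed

theorem mainTheorem12:
  fixes Psi :: "(real^'n) measure" and \<gamma> :: real
  assumes "\<gamma> > 1"
    and "prob_space Psi"
    and "sets Psi = sets borel"
    and "measure Psi std_simplex = 1"
    and "\<And>a::real^'n. a \<noteq> 0 \<Longrightarrow> measure Psi {s\<in>std_simplex. a \<bullet> s = 0} = 0"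
    and "\<And>i. eta Psi \<gamma> (axis i 1) > 0"
  shows "\<exists>!w. w \<in> std_simplex \<and> (\<forall>v\<in>std_simplex. fobj Psi \<gamma> w \<le> fobj Psi \<gamma> v)"
proof -
  have finite_Psi: "finite_measure Psi"
    using assms(2) by (simp add: prob_space_def)
  have "continuous_on std_simplex (fobj Psi \<gamma>)"
    using continuous_on_fobj[OF finite_Psi assms(3)] assms(1,6) by simp
  then obtain w where "w \<in> std_simplex" "\<forall>v\<in>std_simplex. fobj Psi \<gamma> w \<le> fobj Psi \<gamma> v"
    using continuous_attains_inf[OF compact_std_simplex] axis_in_std_simplex by blast
  moreover have "v = w"
    if "v \<in> std_simplex" "\<forall>u\<in>std_simplex. fobj Psi \<gamma> v \<le> fobj Psi \<gamma> u"
      "w \<in> std_simplex" "\<forall>u\<in>std_simplex. fobj Psi \<gamma> w \<le> fobj Psi \<gamma> u" for v w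
  proof (rule ccontr)
    assume "v \<noteq> w"
    then have "\<exists>u\<in>std_simplex. fobj Psi \<gamma> u < (fobj Psi \<gamma> v + fobj Psi \<gamma> w) / 2"
      using ex_fobj_less_average[OF finite_Psi assms(3,1,4)] assms(5,6) that(1,3) by blast
    with that show False by fastforce
  qed
  ultimately show ?thesis by blast
qed

end
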